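(* Assume $A$ contains at least one prime element and that $U(A)$ is finite. Then every $x\in A\setminus(U(A)\cup\{0\})$ such that $\mathcal D(x)$ is finite has a prime divisor, i.e. there is a prime $p\in A$ with $p\mid x$.
   Context: Let $\mathbb F$ be a subfield of $\mathbb C$ with a norm (absolute value) $\|\cdot\|_{\mathbb F}$, and $A$ a subring of $\mathbb F$ containing $1$ (hence an integral domain). $U(A)$ is the unit group of $A$; $d\mid x$ means $x=dc$ for some $c\in A$; $\mathcal D(x)=\{d\in A:d\mid x\}$; $xU(A)=\{xu:u\in U(A)\}$. $N:A\to\mathbb F\cap\mathbb R$ is a map with $N(a)\neq0$ for all nonzero $a\in A$ and satisfying: for all $x\in A$, $N(x)\in A$, $\mathcal D(N(x))=\mathcal D(x)$ and $N(N(x))=N(x)$; for all $x,y\in A$ there is $z\in A$ with $N(x)+N(y)=N(z)$; $N(-x)=N(x)$; $N(xy)=N(x)N(y)$; $\|N(x)\|_{\mathbb F}=N(x)$; for every $x\ne0$ there is $x'\in\mathbb F\cap\mathbb R$ with $N(x)^2=xx'\in A$. An element $p\in A$ is irreducible if $p\notin U(A)\cup\{0\}$ and $\mathcal D(p)=U(A)\cup pU(A)$; it is prime if it is irreducible and $N(p)=p$. *)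

theory Defs
  imports Complex_Main
begin

definition subfield_C :: "complex set \<Rightarrow> bool" where
  "subfield_C F \<longleftrightarrow> 0 \<in> F \<and> 1 \<in> F \<and>
     (\<forall>x\<in>F. \<forall>y\<in>F. x + y \<in> F \<and> x * y \<in> F) \<and>
     (\<forall>x\<in>F. - x \<in> F) \<and> (\<forall>x\<in>F. x \<noteq> 0 \<longrightarrow> inverse x \<in> F)"

definition abs_value_on :: "complex set \<Rightarrow> (complex \<Rightarrow> real) \<Rightarrow> bool" where
  "abs_value_on F nF \<longleftrightarrow>
     (\<forall>x\<in>F. nF x \<ge> 0 \<and> (nF x = 0 \<longleftrightarrow> x = 0)) \<and>
     (\<forall>x\<in>F. \<forall>y\<in>F. nF (x * y) = nF x * nF y \<and> nF (x + y) \<le> nF x + nF y)"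

definition subring_of :: "complex set \<Rightarrow> complex set \<Rightarrow> bool" where
  "subring_of A F \<longleftrightarrow> A \<subseteq> F \<and> 0 \<in> A \<and> 1 \<in> A \<and>
     (\<forall>x\<in>A. \<forall>y\<in>A. x + y \<in> A \<and> x * y \<in> A) \<and> (\<forall>x\<in>A. - x \<in> A)"

definition units :: "complex set \<Rightarrow> complex set" ("U") where
  "U A = {u \<in> A. \<exists>v\<in>A. u * v = 1}"

definition rdvd :: "complex set \<Rightarrow> complex \<Rightarrow> complex \<Rightarrow> bool" where
  "rdvd A d x \<longleftrightarrow> (\<exists>c\<in>A. x = d * c)"

definition divisors :: "complex set \<Rightarrow> complex \<Rightarrow> complex set" ("\<D>") where
  "\<D> A x = {d \<in> A. rdvd A d x}"

definition assoc_set :: "complex set \<Rightarrow> complex \<Rightarrow> complex set" where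
  "assoc_set A x = {x * u | u. u \<in> U A}"

definition N_map :: "complex set \<Rightarrow> complex set \<Rightarrow> (complex \<Rightarrow> real) \<Rightarrow> (complex \<Rightarrow> complex) \<Rightarrow> bool" where
  "N_map F A nF N \<longleftrightarrow>
     (\<forall>a\<in>A. N a \<in> F \<and> N a \<in> \<real>) \<and>
     (\<forall>a\<in>A. a \<noteq> 0 \<longrightarrow> N a \<noteq> 0) \<and>
     (\<forall>x\<in>A. N x \<in> A \<and> \<D> A (N x) = \<D> A x \<and> N (N x) = N x) \<and>
     (\<forall>x\<in>A. \<forall>y\<in>A. \<exists>z\<in>A. N x + N y = N z) \<and>
     (\<forall>x\<in>A. N (- x) = N x) \<and>
     (\<forall>x\<in>A. \<forall>y\<in>A. N (x * y) = N x * N y) \<and>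
     (\<forall>x\<in>A. complex_of_real (nF (N x)) = N x) \<and>
     (\<forall>x\<in>A. x \<noteq> 0 \<longrightarrow> (\<exists>x'. x' \<in> F \<and> x' \<in> \<real> \<and> (N x)\<^sup>2 = x * x' \<and> x * x' \<in> A))"

definition irreducible_in :: "complex set \<Rightarrow> complex \<Rightarrow> bool" where
  "irreducible_in A p \<longleftrightarrow> p \<in> A \<and> p \<notin> U A \<union> {0} \<and> \<D> A p = U A \<union> assoc_set A p"

definition prime_in :: "complex set \<Rightarrow> (complex \<Rightarrow> complex) \<Rightarrow> complex \<Rightarrow> bool" where
  "prime_in A N p \<longleftrightarrow> irreducible_in A p \<and> N p = p"

end

theory Submission
  imports Defs
begin

text \<open>A non-unit divisor of x with the fewest divisors is irreducible: any non-unit divisor e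
  of it has a divisor set contained in, hence (by minimality and finiteness) equal to, its own,
  so the two divide each other and are associates. If q is irreducible, N q lies in
  \<D>(N q) = \<D>(q) = U(A) \<union> qU(A) and is not a unit (q divides it), so N q is an associate of q;
  associates of irreducibles are irreducible, and N (N q) = N q makes N q a prime dividing x.\<close>

lemma subring_mult_closed: "subring_of A F \<Longrightarrow> a \<in> A \<Longrightarrow> b \<in> A \<Longrightarrow> a * b \<in> A"
  by (simp add: subring_of_def)

lemma subring_one: "subring_of A F \<Longrightarrow> 1 \<in> A"
  by (simp add: subring_of_def)

lemma rdvd_refl: "subring_of A F \<Longrightarrow> a \<in> A \<Longrightarrow> rdvd A a a"
  unfolding rdvd_def by (metis mult_1_right subring_one)

lemma rdvd_mult_right: "b \<in> A \<Longrightarrow> rdvd A a (a * b)"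
  unfolding rdvd_def by blast

lemma rdvd_trans:
  assumes "subring_of A F" "rdvd A a b" "rdvd A b c"
  shows "rdvd A a c"
proof -
  obtain s t where "s \<in> A" "t \<in> A" "b = a * s" "c = b * t"
    using assms(2,3) by (auto simp: rdvd_def)
  then show ?thesis
    using subring_mult_closed[OF assms(1)] by (auto simp: rdvd_def mult.assoc)
qed

lemma divisors_mono: "subring_of A F \<Longrightarrow> rdvd A e d \<Longrightarrow> \<D> A e \<subseteq> \<D> A d"
  by (auto simp: divisors_def intro: rdvd_trans)

lemma units_rdvd:
  assumes "subring_of A F" "u \<in> U A" "y \<in> A"
  shows "rdvd A u y"
proof -
  obtain v where "v \<in> A" "u * v = 1"
    using assms(2) by (auto simp: units_def)
  then have "y = u * (v * y)" "v * y \<in> A"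
    using subring_mult_closed[OF assms(1)] assms(3) by (auto simp: mult.assoc[symmetric])
  then show ?thesis
    unfolding rdvd_def by blast
qed

lemma units_inverse:
  assumes "u \<in> U A"
  obtains v where "v \<in> U A" "u * v = 1"
  using assms by (auto simp: units_def mult.commute)

lemma units_mult:
  assumes "subring_of A F" "u \<in> U A" "v \<in> U A"
  shows "u * v \<in> U A"
proof -
  obtain u' v' where "u' \<in> U A" "v' \<in> U A" "u * u' = 1" "v * v' = 1"
    using assms(2,3) units_inverse by metis
  then have "(u * v) * (v' * u') = 1"
    by (metis mult.assoc mult_1_right)
  then show ?thesis
    using \<open>u' \<in> U A\<close> \<open>v' \<in> U A\<close> assms subring_mult_closed[OF assms(1)]
    by (auto simp: units_def)
qed

lemma rdvd_antisym_associated: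
  assumes "subring_of A F" "d \<noteq> 0" "rdvd A e d" "rdvd A d e"
  shows "\<exists>u \<in> U A. e = d * u"
proof -
  obtain c c' where c: "c \<in> A" "e = d * c" and c': "c' \<in> A" "d = e * c'"
    using assms(3,4) by (auto simp: rdvd_def)
  then have "d * (c * c') = d * 1"
    by (metis mult.assoc mult_1_right)
  then have "c * c' = 1"
    using assms(2) by (metis mult_left_cancel)
  then have "c \<in> U A"
    using c c' by (auto simp: units_def)
  with c show ?thesis by blast
qed

lemma divisors_mult_unit:
  assumes R: "subring_of A F" and "d \<in> A" "u \<in> U A"
  shows "\<D> A (d * u) = \<D> A d"
proof -
  obtain v where v: "v \<in> U A" "u * v = 1"
    using assms(3) units_inverse by metis
  have "u \<in> A" "v \<in> A"
    using assms(3) v(1) by (auto simp: units_def)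
  have "d = (d * u) * v"
    using v(2) by (simp add: mult.assoc)
  then have "rdvd A (d * u) d"
    using rdvd_mult_right[OF \<open>v \<in> A\<close>] by metis
  moreover have "rdvd A d (d * u)"
    using rdvd_mult_right[OF \<open>u \<in> A\<close>] .
  ultimately show ?thesis
    using divisors_mono[OF R] by blast
qed

lemma assoc_set_mult_unit:
  assumes R: "subring_of A F" and "u \<in> U A"
  shows "assoc_set A (d * u) = assoc_set A d"
proof -
  obtain v where v: "v \<in> U A" "u * v = 1"
    using assms(2) units_inverse by metis
  have "d * w = (d * u) * (v * w)" for w
    using v(2) by (metis mult.assoc mult_1_left)
  then have "assoc_set A d \<subseteq> assoc_set A (d * u)"
    unfolding assoc_set_def using units_mult[OF R v(1)] by blast
  moreover have "assoc_set A (d * u) \<subseteq> assoc_set A d"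
    unfolding assoc_set_def using units_mult[OF R assms(2)] by (auto simp: mult.assoc)
  ultimately show ?thesis by blast
qed

lemma units_assoc_set_subset_divisors:
  assumes R: "subring_of A F" and "d \<in> A"
  shows "U A \<union> assoc_set A d \<subseteq> \<D> A d"
proof -
  have "U A \<subseteq> \<D> A d"
    using units_rdvd[OF R _ assms(2)] by (auto simp: divisors_def units_def)
  moreover have "d * u \<in> \<D> A d" if "u \<in> U A" for u
    using divisors_mult_unit[OF R assms(2) that] rdvd_refl[OF R] assms(2)
      subring_mult_closed[OF R] that
    by (auto simp: divisors_def units_def)
  ultimately show ?thesis
    by (auto simp: assoc_set_def)
qed

lemma rdvd_unit_imp_unit:
  assumes R: "subring_of A F" and "a \<in> A" "rdvd A a u" "u \<in> U A"
  shows "a \<in> U A"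
proof -
  obtain c where c: "c \<in> A" "u = a * c"
    using assms(3) by (auto simp: rdvd_def)
  obtain v where v: "v \<in> U A" "u * v = 1"
    using assms(4) units_inverse by metis
  then have "a * (c * v) = 1" "c * v \<in> A"
    using c subring_mult_closed[OF R] by (auto simp: mult.assoc units_def)
  with assms(2) show ?thesis
    by (auto simp: units_def)
qed

lemma mult_unit_notin_units:
  assumes R: "subring_of A F" and "d \<in> A" "d \<notin> U A" "u \<in> U A"
  shows "d * u \<notin> U A"
  using rdvd_unit_imp_unit[OF R assms(2) rdvd_mult_right] assms(3,4) by (auto simp: units_def)

lemma irreducible_mult_unit:
  assumes R: "subring_of A F" and q: "irreducible_in A q" and u: "u \<in> U A"
  shows "irreducible_in A (q * u)"
proof -
  have "q \<in> A" "q \<notin> U A" "q \<noteq> 0" "\<D> A q = U A \<union> assoc_set A q"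
    using q by (auto simp: irreducible_in_def)
  moreover have "u \<in> A" "u \<noteq> 0"
    using u by (auto simp: units_def)
  ultimately show ?thesis
    using divisors_mult_unit[OF R _ u] assoc_set_mult_unit[OF R u]
      mult_unit_notin_units[OF R _ _ u] subring_mult_closed[OF R]
    by (simp add: irreducible_in_def)
qed

lemma divisors_eq_if_minimal:
  assumes R: "subring_of A F" and fin: "finite (\<D> A d)" and "rdvd A e d"
    and min: "card (\<D> A d) \<le> card (\<D> A e)"
  shows "\<D> A e = \<D> A d"
  using card_subset_eq[OF fin divisors_mono[OF R assms(3)]]
    card_mono[OF fin divisors_mono[OF R assms(3)]] min
  by linarith

lemma exists_irreducible_rdvd:
  assumes R: "subring_of A F" and x: "x \<in> A - (U A \<union> {0})" and fin: "finite (\<D> A x)"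
  shows "\<exists>q. irreducible_in A q \<and> rdvd A q x"
proof -
  define S where "S = {d \<in> \<D> A x. d \<notin> U A}"
  have "x \<in> S"
    using x rdvd_refl[OF R] by (auto simp: S_def divisors_def)
  then obtain d where dS: "d \<in> S" and min: "\<And>e. e \<in> S \<Longrightarrow> card (\<D> A d) \<le> card (\<D> A e)"
    using ex_has_least_nat[of "\<lambda>d. d \<in> S" x "\<lambda>d. card (\<D> A d)"] by blast
  have dA: "d \<in> A" and dx: "rdvd A d x" and dU: "d \<notin> U A"
    using dS by (auto simp: S_def divisors_def)
  have d0: "d \<noteq> 0"
    using dx x by (auto simp: rdvd_def)
  have fin_d: "finite (\<D> A d)"
    using divisors_mono[OF R dx] fin finite_subset by blast
  have "e \<in> U A \<union> assoc_set A d" if "e \<in> \<D> A d" for e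
  proof (cases "e \<in> U A")
    case False
    have ed: "rdvd A e d" and "e \<in> A"
      using that by (auto simp: divisors_def)
    with False have "e \<in> S"
      using rdvd_trans[OF R ed dx] by (auto simp: S_def divisors_def)
    then have "\<D> A e = \<D> A d"
      using divisors_eq_if_minimal[OF R fin_d ed] min by blast
    then have "rdvd A d e"
      using rdvd_refl[OF R dA] dA by (auto simp: divisors_def)
    then show ?thesis
      using rdvd_antisym_associated[OF R d0 ed] by (auto simp: assoc_set_def)
  qed simp
  then have "irreducible_in A d"
    using units_assoc_set_subset_divisors[OF R dA] dA dU d0 by (auto simp: irreducible_in_def)
  with dx show ?thesis by blast
qed

lemma norm_of_irreducible_prime:
  assumes R: "subring_of A F" and NA: "N_map F A nF N" and q: "irreducible_in A q"
  shows "prime_in A N (N q) \<and> rdvd A (N q) q"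
proof -
  have qA: "q \<in> A" and qU: "q \<notin> U A" and Dq: "\<D> A q = U A \<union> assoc_set A q"
    using q by (auto simp: irreducible_in_def)
  have Nq: "N q \<in> A" "\<D> A (N q) = \<D> A q" "N (N q) = N q"
    using NA qA by (auto simp: N_map_def)
  have Nq_dvd: "N q \<in> \<D> A q"
    using rdvd_refl[OF R Nq(1)] Nq(1,2) by (auto simp: divisors_def)
  then have "N q \<in> U A \<union> assoc_set A q"
    using Dq by simp
  moreover have "N q \<notin> U A"
  proof
    assume "N q \<in> U A"
    have "rdvd A q (N q)"
      using Nq(2) rdvd_refl[OF R qA] qA by (auto simp: divisors_def)
    with \<open>N q \<in> U A\<close> qA qU show False
      using rdvd_unit_imp_unit[OF R] by blast
  qed
  ultimately obtain u where u: "u \<in> U A" "N q = q * u"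
    by (auto simp: assoc_set_def)
  have "irreducible_in A (N q)"
    using irreducible_mult_unit[OF R q u(1)] u(2) by simp
  moreover have "rdvd A (N q) q"
    using Nq_dvd by (simp add: divisors_def)
  ultimately show ?thesis
    using Nq(3) by (simp add: prime_in_def)
qed

theorem mainTheorem8:
  fixes F A :: "complex set" and nF :: "complex \<Rightarrow> real" and N :: "complex \<Rightarrow> complex"
  assumes "subfield_C F"
    and "abs_value_on F nF"
    and "subring_of A F"
    and "N_map F A nF N"
    and "\<exists>p\<in>A. prime_in A N p"
    and "finite (U A)"
    and "x \<in> A - (U A \<union> {0})"
    and "finite (\<D> A x)"
  shows "\<exists>p\<in>A. prime_in A N p \<and> rdvd A p x"
proof -
  obtain q where q: "irreducible_in A q" "rdvd A q x"
    using exists_irreducible_rdvd[OF assms(3,7,8)] by blast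
  then have "prime_in A N (N q)" "rdvd A (N q) x"
    using norm_of_irreducible_prime[OF assms(3,4)] rdvd_trans[OF assms(3)] by blast+
  moreover have "N q \<in> A"
    using \<open>prime_in A N (N q)\<close> by (simp add: prime_in_def irreducible_in_def)
  ultimately show ?thesis by blast
qed

end
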